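(* On $S_{1,2}=S_1\cap S_2$ the coefficients $(a_0,a_1,h_1,h_2)$ are free parameters, with $a_2=2h_2+h_{1,x}+a_0h_1$ and $h_3=-h_{1,xx}-2h_{2,x}+h_1^2-a_1h_1-a_0(h_{1,x}+h_2)$, and the restriction of the DKP flow $t_2$ to $S_{1,2}$ is $\partial_{t_2}a_0=\partial_x(2a_1-a_0^2+a_{0,x})$, $\partial_{t_2}a_1=2a_{2,x}+a_{1,xx}+2a_{0,x}(h_1-a_1)$, $\partial_{t_2}h_1=\partial_x(2h_2+h_{1,x})$, $\partial_{t_2}h_2=-\partial_x\big(2h_{1,xx}+3h_{2,x}-3h_1^2+2a_0(h_{1,x}+h_2)+2a_1h_1\big)$. Moreover, on $S_{1,2}$, $z\big(h^{(2)}+a_0h^{(1)}+(a_1-2h_1)\big)=h^{(3)}+a_0h^{(2)}+(a_1-3h_1)h^{(1)}+(a_2-2a_0h_1-3h_2-3h_{1,x})$.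
   Context: Let $x$ be a space variable; coefficients are functions of $x$, subscript $x$ denotes $\partial_x$. $M$ is the affine space of formal Laurent series $h(z)=z+\sum_{j\ge1}h_jz^{-j}$, $A$ that of $a(z)=z+\sum_{j\ge0}a_jz^{-j}$, $N=M\times A$. Faà di Bruno iterates: $h^{(0)}=1$, $h^{(j+1)}=\partial_xh^{(j)}+h\,h^{(j)}$. For $j\ge0$ the KP current $H^{(j)}$ is the unique series $h^{(j)}+\sum_{l=0}^{j-2}p^j_l[h]h^{(l)}$ ($p^j_l$ differential polynomials in the $h_i$) with $H^{(j)}=z^j+O(z^{-1})$; e.g. $H^{(1)}=h$, $H^{(2)}=h^{(2)}-2h_1$, $H^{(3)}=h^{(3)}-3h_1h^{(1)}-3(h_2+h_{1,x})$. The DKP equations on $N$ are $\partial_{t_j}h=\partial_xH^{(j)}$, $\partial_{t_j}a=a(\tilde H^{(j)}-H^{(j)})$, with $\tilde H^{(j)}$ the current evaluated at $\tilde h=h+a_x/a$. For $l\ge-1$, $S_l\subset N$ is defined by $z^la=H^{(l+1)}+\sum_{m=0}^{l}a_mH^{(l-m)}$; thus $S_1:\ za=H^{(2)}+a_0H^{(1)}+a_1$ and $S_2:\ z^2a=H^{(3)}+a_0H^{(2)}+a_1H^{(1)}+a_2$. *)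

theory Defs
  imports "HOL-Analysis.Analysis" "HOL-Library.Function_Algebras"
    "HOL-Computational_Algebra.Formal_Laurent_Series"
begin

text \<open>Coefficients are real functions of the space variable x.
  A formal Laurent series in z with finitely many positive powers of z is encoded
  as an element of the library type fls in the variable X = z^{-1}; thus z is fls_X_inv
  and the coefficient of z^k is the X-coefficient of index -k.\<close>

type_synonym coef = "real \<Rightarrow> real"
type_synonym ser = "coef fls"

definition smooth :: "coef \<Rightarrow> bool" where
  "smooth f \<longleftrightarrow> (\<forall>n x. ((deriv ^^ n) f) differentiable (at x))"

definition zz :: ser where "zz = fls_X_inv"

definition zc :: "ser \<Rightarrow> int \<Rightarrow> coef" where
  "zc s k = fls_nth s (- k)"

definition cst :: "coef \<Rightarrow> ser" where "cst c = fls_const c"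

definition Dx :: "ser \<Rightarrow> ser" where
  "Dx s = Abs_fls (\<lambda>n. deriv (fls_nth s n))"

definition smooth_ser :: "ser \<Rightarrow> bool" where
  "smooth_ser s \<longleftrightarrow> (\<forall>k. smooth (zc s k))"

definition inM :: "ser \<Rightarrow> bool" where
  "inM h \<longleftrightarrow> smooth_ser h \<and> zc h 1 = 1 \<and> (\<forall>k. k > 1 \<longrightarrow> zc h k = 0) \<and> zc h 0 = 0"

definition inA :: "ser \<Rightarrow> bool" where
  "inA a \<longleftrightarrow> smooth_ser a \<and> zc a 1 = 1 \<and> (\<forall>k. k > 1 \<longrightarrow> zc a k = 0)"

definition inN :: "ser \<Rightarrow> ser \<Rightarrow> bool" where
  "inN h a \<longleftrightarrow> inM h \<and> inA a"

fun fdb :: "ser \<Rightarrow> nat \<Rightarrow> ser" where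
  "fdb h 0 = 1"
| "fdb h (Suc j) = Dx (fdb h j) + h * fdb h j"

definition KP :: "ser \<Rightarrow> nat \<Rightarrow> ser" where
  "KP h j = (THE H. (\<exists>p :: nat \<Rightarrow> coef.
      H = fdb h j + (\<Sum>l\<in>{0..<j-1}. cst (p l) * fdb h l))
      \<and> zc H (int j) = 1 \<and> (\<forall>k. k > int j \<longrightarrow> zc H k = 0)
      \<and> (\<forall>k. 0 \<le> k \<and> k < int j \<longrightarrow> zc H k = 0))"

definition logder :: "ser \<Rightarrow> ser" where
  "logder a = (THE r. a * r = Dx a)"

definition htilde :: "ser \<Rightarrow> ser \<Rightarrow> ser" where
  "htilde h a = h + logder a"

text \<open>DKP flows (components of the vector field of the t_j flow on N).\<close>
definition dkp_h :: "nat \<Rightarrow> ser \<Rightarrow> ser \<Rightarrow> ser" where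
  "dkp_h j h a = Dx (KP h j)"

definition dkp_a :: "nat \<Rightarrow> ser \<Rightarrow> ser \<Rightarrow> ser" where
  "dkp_a j h a = a * (KP (htilde h a) j - KP h j)"

definition inS :: "nat \<Rightarrow> ser \<Rightarrow> ser \<Rightarrow> bool" where
  "inS l h a \<longleftrightarrow> inN h a \<and>
     zz ^ l * a = KP h (l + 1) + (\<Sum>m\<in>{0..l}. cst (zc a (- int m)) * KP h (l - m))"

definition inS12 :: "ser \<Rightarrow> ser \<Rightarrow> bool" where
  "inS12 h a \<longleftrightarrow> inS 1 h a \<and> inS 2 h a"

end

theory Submission
  imports Defs
begin

text \<open>
  The equation of S_1 expresses z a = H^(2) + a_0 h + a_1 through (a_0, a_1, h), and a_2 is the
  coefficient of z^(-1) in z a. Substituting into S_2 leaves a single equation for h,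
  z (H^(2) + a_0 h + a_1) = H^(3) + a_0 H^(2) + a_1 h + a_2, whose defect is O(z^(-1)) by the
  normalisation of the currents. The defect is triangular in h: if h_i = h'_i for all i < m,
  then h'^(j) - h^(j) starts at z^(j-1-m) with coefficient j (h'_m - h_m), so the
  coefficient of z^(2-m) in the defect changes by (2 - 3) (h'_m - h_m). Hence h_3, h_4, ... are
  determined recursively by h_1 and h_2: uniqueness by looking at the first coefficient where two
  solutions differ, existence by correcting one coefficient at a time, and smoothness survives
  because the defect is a differential polynomial. The formulas for a_2, h_3 and the restricted
  t_2-flow are then coefficient computations; for the a-flow one uses
  a_x / a = a_0,x z^(-1) + O(z^(-2)).
\<close>

unbundle fps_syntax

text \<open>The imported theories simplify \<open>1 :: nat\<close> to \<open>Suc 0\<close>, which would hide \<open>KP h 1\<close>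
  and \<open>fdb h 1\<close> from the lemmas below.\<close>
declare One_nat_def [simp del]

section \<open>Smooth functions\<close>

lemma deriv_numeral_fun [simp]: "deriv (numeral n :: real \<Rightarrow> real) = 0"
  by (simp add: numeral_fun zero_fun_def)

lemma deriv_zero_fun [simp]: "deriv (0 :: real \<Rightarrow> real) = 0"
  and deriv_one_fun [simp]: "deriv (1 :: real \<Rightarrow> real) = 0"
  by (simp_all add: zero_fun_def one_fun_def)

definition differentiable_everywhere :: "coef \<Rightarrow> bool" where
  "differentiable_everywhere f \<longleftrightarrow> (\<forall>x. f differentiable (at x))"

lemma differentiable_everywhere_DERIV:
  "differentiable_everywhere f \<Longrightarrow> DERIV f x :> deriv f x"
  unfolding differentiable_everywhere_def by (simp add: DERIV_deriv_iff_real_differentiable)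

lemma differentiable_everywhere_add:
  "differentiable_everywhere f \<Longrightarrow> differentiable_everywhere g \<Longrightarrow> differentiable_everywhere (f + g)"
  by (simp add: differentiable_everywhere_def plus_fun_def)

lemma differentiable_everywhere_mult:
  "differentiable_everywhere f \<Longrightarrow> differentiable_everywhere g \<Longrightarrow> differentiable_everywhere (f * g)"
  by (simp add: differentiable_everywhere_def times_fun_def)

lemma deriv_add_fun:
  "differentiable_everywhere f \<Longrightarrow> differentiable_everywhere g \<Longrightarrow> deriv (f + g) = deriv f + deriv g"
  by (rule ext) (auto simp: plus_fun_def intro!: DERIV_imp_deriv DERIV_add
    differentiable_everywhere_DERIV)

lemma deriv_diff_fun:
  "differentiable_everywhere f \<Longrightarrow> differentiable_everywhere g \<Longrightarrow> deriv (f - g) = deriv f - deriv g"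
  by (rule ext) (auto simp: fun_diff_def intro!: DERIV_imp_deriv DERIV_diff
    differentiable_everywhere_DERIV)

lemma deriv_uminus_fun: "differentiable_everywhere f \<Longrightarrow> deriv (- f) = - deriv f"
  by (rule ext) (auto simp: fun_Compl_def intro!: DERIV_imp_deriv DERIV_minus
    differentiable_everywhere_DERIV)

lemma deriv_mult_fun:
  "differentiable_everywhere f \<Longrightarrow> differentiable_everywhere g \<Longrightarrow>
    deriv (f * g) = deriv f * g + f * deriv g"
proof (rule ext)
  fix x
  assume "differentiable_everywhere f" "differentiable_everywhere g"
  from DERIV_mult[OF differentiable_everywhere_DERIV[OF this(1)]
    differentiable_everywhere_DERIV[OF this(2)]]
  show "deriv (f * g) x = (deriv f * g + f * deriv g) x"
    by (auto simp: times_fun_def mult.commute intro!: DERIV_imp_deriv)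
qed

definition differentiable_upto :: "nat \<Rightarrow> coef \<Rightarrow> bool" where
  "differentiable_upto n f \<longleftrightarrow> (\<forall>k\<le>n. differentiable_everywhere ((deriv ^^ k) f))"

lemma differentiable_upto_0 [simp]: "differentiable_upto 0 f \<longleftrightarrow> differentiable_everywhere f"
  by (simp add: differentiable_upto_def)

lemma differentiable_upto_Suc:
  "differentiable_upto (Suc n) f \<longleftrightarrow> differentiable_everywhere f \<and> differentiable_upto n (deriv f)"
  unfolding differentiable_upto_def
  by (simp add: All_less_Suc2 funpow_Suc_right flip: less_Suc_eq_le del: funpow.simps)

lemma differentiable_upto_add:
  "differentiable_upto n f \<Longrightarrow> differentiable_upto n g \<Longrightarrow> differentiable_upto n (f + g)"
  by (induction n arbitrary: f g)
    (auto simp: differentiable_upto_Suc deriv_add_fun differentiable_everywhere_add)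

lemma differentiable_upto_Suc_imp: "differentiable_upto (Suc n) f \<Longrightarrow> differentiable_upto n f"
  by (simp add: differentiable_upto_def)

lemma differentiable_upto_mult:
  "differentiable_upto n f \<Longrightarrow> differentiable_upto n g \<Longrightarrow> differentiable_upto n (f * g)"
proof (induction n arbitrary: f g)
  case 0
  then show ?case by (metis differentiable_upto_0 differentiable_everywhere_mult)
next
  case (Suc n)
  then have "differentiable_upto n f" "differentiable_upto n (deriv f)"
    "differentiable_upto n g" "differentiable_upto n (deriv g)"
    by (simp_all add: differentiable_upto_Suc differentiable_upto_Suc_imp)
  then have "differentiable_upto n (deriv f * g + f * deriv g)"
    by (intro differentiable_upto_add Suc.IH)
  moreover have "differentiable_everywhere (f * g)"
    using Suc.prems by (metis differentiable_upto_Suc differentiable_everywhere_mult)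
  moreover have "deriv (f * g) = deriv f * g + f * deriv g"
    using Suc.prems by (metis differentiable_upto_Suc deriv_mult_fun)
  ultimately show ?case
    by (simp only: differentiable_upto_Suc)
qed

lemma smooth_iff_differentiable_upto: "smooth f \<longleftrightarrow> (\<forall>n. differentiable_upto n f)"
  unfolding smooth_def differentiable_upto_def differentiable_everywhere_def by blast

lemma smooth_imp_differentiable_everywhere: "smooth f \<Longrightarrow> differentiable_everywhere f"
  by (metis smooth_iff_differentiable_upto differentiable_upto_0)

lemma smooth_deriv [simp]: "smooth f \<Longrightarrow> smooth (deriv f)"
  by (metis smooth_iff_differentiable_upto differentiable_upto_Suc)

lemma smooth_add [simp]: "smooth f \<Longrightarrow> smooth g \<Longrightarrow> smooth (f + g)"
  and smooth_mult [simp]: "smooth f \<Longrightarrow> smooth g \<Longrightarrow> smooth (f * g)"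
  by (simp_all add: smooth_iff_differentiable_upto differentiable_upto_add differentiable_upto_mult)

lemma smooth_const [simp]: "smooth (\<lambda>x. c)"
proof -
  have "(deriv ^^ Suc n) (\<lambda>x::real. c) = (\<lambda>x. 0)" for n
    by (induction n) auto
  then show ?thesis
    unfolding smooth_def by (metis differentiable_const funpow_0 not0_implies_Suc)
qed

lemma smooth_numeral [simp]: "smooth (numeral n)"
  and smooth_zero [simp]: "smooth 0" and smooth_one [simp]: "smooth 1"
  by (simp_all add: numeral_fun zero_fun_def one_fun_def)

lemma smooth_uminus [simp]: "smooth f \<Longrightarrow> smooth (- f)"
proof -
  assume "smooth f"
  moreover have "- f = (\<lambda>x. - 1) * f"
    by (simp add: fun_eq_iff)
  ultimately show ?thesis
    by (metis smooth_const smooth_mult)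
qed

lemma smooth_diff [simp]: "smooth f \<Longrightarrow> smooth g \<Longrightarrow> smooth (f - g)"
  using smooth_add[of f "- g"] by simp

lemma smooth_power [simp]: "smooth f \<Longrightarrow> smooth (f ^ n)"
  by (induction n) simp_all

lemma smooth_sum: "(\<And>i. i \<in> A \<Longrightarrow> smooth (g i)) \<Longrightarrow> smooth (\<Sum>i\<in>A. g i)"
  by (induction A rule: infinite_finite_induct) auto

lemma deriv_add_smooth [simp]: "smooth f \<Longrightarrow> smooth g \<Longrightarrow> deriv (f + g) = deriv f + deriv g"
  and deriv_diff_smooth [simp]: "smooth f \<Longrightarrow> smooth g \<Longrightarrow> deriv (f - g) = deriv f - deriv g"
  and deriv_mult_smooth [simp]: "smooth f \<Longrightarrow> smooth g \<Longrightarrow> deriv (f * g) = deriv f * g + f * deriv g"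
  and deriv_uminus_smooth [simp]: "smooth f \<Longrightarrow> deriv (- f) = - deriv f"
  by (simp_all add: smooth_imp_differentiable_everywhere deriv_add_fun deriv_diff_fun deriv_mult_fun
      deriv_uminus_fun)

section \<open>Laurent series vanishing below an index\<close>

lemma Icc_int_insert_lb: "a \<le> b \<Longrightarrow> {a..b::int} = insert a {a + 1..b}"
  by auto

text \<open>In terms of \<open>z = X\<^sup>-\<^sup>1\<close>, \<open>vanishes_below f d\<close> says \<open>f = O(z\<^sup>-\<^sup>d)\<close>.\<close>
definition vanishes_below :: "'a::zero fls \<Rightarrow> int \<Rightarrow> bool" where
  "vanishes_below f d \<longleftrightarrow> (\<forall>n<d. f $$ n = 0)"

lemma vanishes_belowD: "vanishes_below f d \<Longrightarrow> n < d \<Longrightarrow> f $$ n = 0"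
  by (simp add: vanishes_below_def)

lemma vanishes_below_mono: "vanishes_below f d \<Longrightarrow> d' \<le> d \<Longrightarrow> vanishes_below f d'"
  by (simp add: vanishes_below_def)

lemma vanishes_below_add: "vanishes_below f d \<Longrightarrow> vanishes_below g d \<Longrightarrow> vanishes_below (f + g) d"
  by (simp add: vanishes_below_def)

lemma vanishes_below_sum:
  "(\<And>i. i \<in> A \<Longrightarrow> vanishes_below (f i) d) \<Longrightarrow> vanishes_below (\<Sum>i\<in>A. f i) d"
  by (induction A rule: infinite_finite_induct) (auto simp: vanishes_below_def)

lemma fls_times_nth_vanishes_below:
  fixes f g :: "'a::semiring_0 fls"
  assumes f: "vanishes_below f d1" and g: "vanishes_below g d2"
  shows "(f * g) $$ n = (\<Sum>i=d1..n - d2. f $$ i * g $$ (n - i))"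
proof (cases "f = 0 \<or> g = 0")
  case False
  then have "d1 \<le> fls_subdegree f" "d2 \<le> fls_subdegree g"
    using f g by (auto simp: vanishes_below_def intro: fls_subdegree_geI)
  then have "{fls_subdegree f..n - fls_subdegree g} \<subseteq> {d1..n - d2}"
    by auto
  moreover have "f $$ i * g $$ (n - i) = 0" if "i \<notin> {fls_subdegree f..n - fls_subdegree g}" for i
    using that by (cases "i < fls_subdegree f") auto
  ultimately have "(\<Sum>i=fls_subdegree f..n - fls_subdegree g. f $$ i * g $$ (n - i))
      = (\<Sum>i=d1..n - d2. f $$ i * g $$ (n - i))"
    by (intro sum.mono_neutral_left) auto
  then show ?thesis
    by (simp add: fls_times_nth(2))
qed auto

lemma vanishes_below_mult:
  fixes f g :: "'a::semiring_0 fls"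
  shows "vanishes_below f d1 \<Longrightarrow> vanishes_below g d2 \<Longrightarrow> vanishes_below (f * g) (d1 + d2)"
  by (simp add: vanishes_below_def[of "f * g"] fls_times_nth_vanishes_below)

lemma fls_times_nth_lowest:
  fixes f g :: "'a::semiring_0 fls"
  shows "vanishes_below f d1 \<Longrightarrow> vanishes_below g d2 \<Longrightarrow> (f * g) $$ (d1 + d2) = f $$ d1 * g $$ d2"
  by (simp add: fls_times_nth_vanishes_below)

lemma Dx_nth [simp]: "Dx s $$ n = deriv (s $$ n)"
proof -
  have "\<forall>\<^sub>\<infinity>n. deriv (s $$ (- int n)) = 0"
    by (rule eventually_mono[OF MOST_fls_neg_nth_eq_0[of s]]) simp
  then show ?thesis
    unfolding Dx_def by simp
qed

lemma vanishes_below_Dx_diff: "vanishes_below (f - g) d \<Longrightarrow> vanishes_below (Dx f - Dx g) d"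
  by (simp add: vanishes_below_def)

lemma cst_nth [simp]: "cst c $$ n = (if n = 0 then c else 0)"
  and cst_mult_nth [simp]: "(cst c * f) $$ n = c * f $$ n"
  by (simp_all add: cst_def)

lemma cst_0 [simp]: "cst 0 = 0"
  and cst_add: "cst (c + d) = cst c + cst d"
  and cst_diff: "cst (c - d) = cst c - cst d"
  and cst_mult: "cst (c * d) = cst c * cst d"
  by (simp_all add: cst_def fls_plus_const fls_minus_const)

lemma vanishes_below_cst_mult: "vanishes_below f d \<Longrightarrow> vanishes_below (cst c * f) d"
  by (simp add: vanishes_below_def)

lemma zz_nth [simp]: "zz $$ n = (if n = -1 then 1 else 0)"
  by (simp add: zz_def)

lemma zz_mult_nth [simp]: "(zz * f) $$ n = f $$ (n + 1)"
  by (simp add: zz_def fls_X_inv_times_conv_shift)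

lemma fls_X_mult_nth [simp]: "(fls_X * f) $$ n = (f :: ser) $$ (n - 1)"
  by (simp add: fls_X_times_conv_shift)

lemma fls_X_mult_zz_mult [simp]: "fls_X * (zz * f) = f"
  and zz_mult_fls_X_mult [simp]: "zz * (fls_X * f) = f"
  by (simp_all add: fls_eq_iff)

lemma Dx_one [simp]: "Dx 1 = 0"
  by (simp add: fls_eq_iff)

lemma smooth_ser_nth: "smooth_ser s \<Longrightarrow> smooth (s $$ n)"
  unfolding smooth_ser_def zc_def by (metis minus_minus)

lemma smooth_serI: "(\<And>n. smooth (s $$ n)) \<Longrightarrow> smooth_ser s"
  by (simp add: smooth_ser_def zc_def)

lemma smooth_ser_add [simp]: "smooth_ser f \<Longrightarrow> smooth_ser g \<Longrightarrow> smooth_ser (f + g)"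
  and smooth_ser_diff [simp]: "smooth_ser f \<Longrightarrow> smooth_ser g \<Longrightarrow> smooth_ser (f - g)"
  and smooth_ser_Dx [simp]: "smooth_ser f \<Longrightarrow> smooth_ser (Dx f)"
  and smooth_ser_cst [simp]: "smooth c \<Longrightarrow> smooth_ser (cst c)"
  and smooth_ser_one [simp]: "smooth_ser 1"
  and smooth_ser_zz [simp]: "smooth_ser zz"
  and smooth_ser_fls_X [simp]: "smooth_ser fls_X"
  by (auto intro!: smooth_serI simp: smooth_ser_nth zz_def)

lemma smooth_ser_mult [simp]: "smooth_ser f \<Longrightarrow> smooth_ser g \<Longrightarrow> smooth_ser (f * g)"
  by (auto intro!: smooth_serI smooth_sum simp: smooth_ser_nth fls_times_nth(2))

lemma smooth_ser_power [simp]: "smooth_ser f \<Longrightarrow> smooth_ser (f ^ n)"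
  by (induction n) auto

lemma smooth_ser_fdb [simp]: "smooth_ser h \<Longrightarrow> smooth_ser (fdb h j)"
  by (induction j) auto

section \<open>Faa di Bruno iterates\<close>

definition M_shaped :: "ser \<Rightarrow> bool" where
  "M_shaped h \<longleftrightarrow> vanishes_below h (-1) \<and> h $$ (-1) = 1 \<and> h $$ 0 = 0"

lemma M_shapedD:
  assumes "M_shaped h"
  shows "vanishes_below h (-1)" "h $$ (-1) = 1" "h $$ 0 = 0"
  using assms by (simp_all add: M_shaped_def)

lemma inM_iff: "inM h \<longleftrightarrow> smooth_ser h \<and> M_shaped h"
  unfolding inM_def M_shaped_def vanishes_below_def zc_def
  by (auto, metis minus_minus neg_less_iff_less)

lemma inA_iff: "inA a \<longleftrightarrow> smooth_ser a \<and> vanishes_below a (-1) \<and> a $$ (-1) = 1"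
  unfolding inA_def vanishes_below_def zc_def
  by (auto, metis minus_minus neg_less_iff_less)

lemma M_shaped_mult_nth:
  assumes h: "M_shaped h" and f: "vanishes_below f d"
  shows "(h * f) $$ n = f $$ (n + 1) + (\<Sum>i=1..n - d. h $$ i * f $$ (n - i))"
proof (cases "n + 1 < d")
  case True
  then show ?thesis
    using vanishes_belowD[OF vanishes_below_mult[OF M_shapedD(1)[OF h] f], of n] f
    by (simp add: vanishes_belowD)
next
  case False
  have "(\<Sum>i=0..n - d. h $$ i * f $$ (n - i)) = (\<Sum>i=1..n - d. h $$ i * f $$ (n - i))"
    using h by (cases "0 \<le> n - d") (simp_all add: Icc_int_insert_lb M_shapedD)
  with False h show ?thesis
    by (simp add: fls_times_nth_vanishes_below[OF M_shapedD(1)[OF h] f] Icc_int_insert_lb M_shapedD)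
qed

lemma fdb_one [simp]: "fdb h 1 = h"
  by (simp add: One_nat_def)

lemma fdb_Suc_nth:
  assumes h: "M_shaped h" and F: "vanishes_below (fdb h j) (- int j)"
  shows "fdb h (j + 1) $$ n
    = deriv (fdb h j $$ n) + fdb h j $$ (n + 1) + (\<Sum>i=1..n + int j. h $$ i * fdb h j $$ (n - i))"
  using M_shaped_mult_nth[OF h F, of n] by (simp flip: Suc_eq_plus1)

lemma fdb_shape:
  assumes h: "M_shaped h"
  shows "vanishes_below (fdb h j) (- int j) \<and> fdb h j $$ (- int j) = 1 \<and> fdb h j $$ (1 - int j) = 0"
proof (induction j)
  case 0
  then show ?case by (simp add: vanishes_below_def)
next
  case (Suc j)
  then have F: "vanishes_below (fdb h j) (- int j)" "fdb h j $$ (- int j) = 1"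
    "fdb h j $$ (1 - int j) = 0"
    by auto
  note nth = fdb_Suc_nth[OF h F(1), unfolded Suc_eq_plus1[symmetric]]
  have "vanishes_below (fdb h (Suc j)) (- int (Suc j))"
    using F(1) by (simp only: vanishes_below_def nth) (simp add: vanishes_belowD)
  moreover have "fdb h (Suc j) $$ (- int (Suc j)) = 1"
    using F(1,2) by (simp only: nth) (simp add: vanishes_belowD)
  moreover have "fdb h (Suc j) $$ (1 - int (Suc j)) = 0"
    using F(2,3) by (simp only: nth) simp
  ultimately show ?case
    by blast
qed

lemma vanishes_below_fdb: "M_shaped h \<Longrightarrow> vanishes_below (fdb h j) (- int j)"
  and fdb_nth_lowest: "M_shaped h \<Longrightarrow> fdb h j $$ (- int j) = 1"
  and fdb_nth_next: "M_shaped h \<Longrightarrow> fdb h j $$ (1 - int j) = 0"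
  using fdb_shape by blast+

lemma fdb_variation:
  assumes h: "M_shaped h" and h': "M_shaped h'" and \<delta>: "vanishes_below (h' - h) m"
  shows "vanishes_below (fdb h' j - fdb h j) (m + 1 - int j)
    \<and> (fdb h' j - fdb h j) $$ (m + 1 - int j) = of_nat j * (h' - h) $$ m"
proof (induction j)
  case 0
  then show ?case by (simp add: vanishes_below_def)
next
  case (Suc j)
  let ?D = "fdb h' j - fdb h j"
  have D: "vanishes_below ?D (m + 1 - int j)" "?D $$ (m + 1 - int j) = of_nat j * (h' - h) $$ m"
    using Suc.IH by blast+
  have split: "fdb h' (Suc j) - fdb h (Suc j)
      = (Dx (fdb h' j) - Dx (fdb h j)) + (h' - h) * fdb h' j + h * ?D"
    by (simp add: algebra_simps)
  have Dx_part: "vanishes_below (Dx (fdb h' j) - Dx (fdb h j)) (m + 1 - int j)"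
    using D(1) by (rule vanishes_below_Dx_diff)
  have Dx_lead: "(Dx (fdb h' j) - Dx (fdb h j)) $$ (m + - int j) = 0"
    using Dx_part by (rule vanishes_belowD) simp
  have \<delta>_part: "vanishes_below ((h' - h) * fdb h' j) (m + - int j)"
    and \<delta>_lead: "((h' - h) * fdb h' j) $$ (m + - int j) = (h' - h) $$ m"
    using vanishes_below_mult[OF \<delta> vanishes_below_fdb[OF h']]
      fls_times_nth_lowest[OF \<delta> vanishes_below_fdb[OF h']] fdb_nth_lowest[OF h']
    by simp_all
  have h_part: "vanishes_below (h * ?D) (m + - int j)"
    and h_lead: "(h * ?D) $$ (m + - int j) = of_nat j * (h' - h) $$ m"
    using vanishes_below_mult[OF M_shapedD(1)[OF h] D(1)]
      fls_times_nth_lowest[OF M_shapedD(1)[OF h] D(1)] D(2) M_shapedD(2)[OF h]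
    by simp_all
  have "vanishes_below (fdb h' (Suc j) - fdb h (Suc j)) (m + - int j)"
    unfolding split using Dx_part \<delta>_part h_part
    by (intro vanishes_below_add) (auto elim: vanishes_below_mono)
  moreover have "(fdb h' (Suc j) - fdb h (Suc j)) $$ (m + - int j) = of_nat (Suc j) * (h' - h) $$ m"
    unfolding split fls_plus_nth Dx_lead \<delta>_lead h_lead by (simp add: algebra_simps)
  ultimately show ?case
    by simp
qed

lemma fdb_two_nth:
  assumes h: "M_shaped h"
  shows "fdb h 2 $$ 0 = 2 * h $$ 1"
    and "fdb h 2 $$ 1 = deriv (h $$ 1) + 2 * h $$ 2"
    and "fdb h 2 $$ 2 = deriv (h $$ 2) + 2 * h $$ 3 + (h $$ 1)\<^sup>2"
  using fdb_Suc_nth[OF h vanishes_below_fdb[OF h, of 1], unfolded one_add_one] h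
  by (simp_all add: Icc_int_insert_lb M_shapedD power2_eq_square del: fdb.simps)

lemma fdb_three_nth:
  assumes h: "M_shaped h"
  shows "fdb h 3 $$ (-1) = 3 * h $$ 1"
    and "fdb h 3 $$ 0 = deriv (fdb h 2 $$ 0) + fdb h 2 $$ 1 + h $$ 2"
    and "fdb h 3 $$ 1 = deriv (fdb h 2 $$ 1) + fdb h 2 $$ 2 + h $$ 1 * fdb h 2 $$ 0 + h $$ 3"
  using fdb_Suc_nth[OF h vanishes_below_fdb[OF h, of 2]] h fdb_nth_lowest[OF h, of 2]
    fdb_nth_next[OF h, of 2]
  by (simp_all add: Icc_int_insert_lb M_shapedD fdb_two_nth del: fdb.simps)

section \<open>KP currents\<close>

definition is_KP :: "ser \<Rightarrow> nat \<Rightarrow> ser \<Rightarrow> bool" where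
  "is_KP h j H \<longleftrightarrow> (\<exists>p :: nat \<Rightarrow> coef.
      H = fdb h j + (\<Sum>l\<in>{0..<j-1}. cst (p l) * fdb h l))
      \<and> zc H (int j) = 1 \<and> (\<forall>k. k > int j \<longrightarrow> zc H k = 0)
      \<and> (\<forall>k. 0 \<le> k \<and> k < int j \<longrightarrow> zc H k = 0)"

lemma is_KP_iff:
  "is_KP h j H \<longleftrightarrow> (\<exists>p. H = fdb h j + (\<Sum>l\<in>{0..<j-1}. cst (p l) * fdb h l))
    \<and> (\<forall>n\<le>0. H $$ n = (if n = - int j then 1 else 0))"
proof -
  have "(\<forall>n\<le>0. H $$ n = (if n = - int j then 1 else 0)) \<longleftrightarrow>
      zc H (int j) = 1 \<and> (\<forall>k>int j. zc H k = 0) \<and> (\<forall>k. 0 \<le> k \<and> k < int j \<longrightarrow> zc H k = 0)"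
    unfolding zc_def by (auto simp: all_conj_distrib) (metis minus_minus neg_0_le_iff_le
      linorder_neqE_linordered_idom neg_less_iff_less)+
  then show ?thesis
    unfolding is_KP_def by blast
qed

lemma fdb_combination_eq_0:
  assumes h: "M_shaped h" and low: "\<forall>k<n. (\<Sum>l<n. cst (c l) * fdb h l) $$ (- int k) = 0"
  shows "(\<Sum>l<n. cst (c l) * fdb h l) = 0"
  using low
proof (induction n)
  case (Suc n)
  have "vanishes_below (\<Sum>l<n. cst (c l) * fdb h l) (1 - int n)"
    by (intro vanishes_below_sum vanishes_below_cst_mult)
      (auto intro!: vanishes_below_mono[OF vanishes_below_fdb[OF h]])
  then have "(\<Sum>l<n. cst (c l) * fdb h l) $$ (- int n) = 0"
    by (rule vanishes_belowD) simp
  moreover have "(\<Sum>l<Suc n. cst (c l) * fdb h l) $$ (- int n) = 0"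
    using Suc.prems lessI by blast
  ultimately have "c n = 0"
    using fdb_nth_lowest[OF h, of n] by (simp only: sum.lessThan_Suc fls_plus_nth cst_mult_nth) simp
  then show ?case
    using Suc by simp
qed simp

lemma is_KP_unique:
  assumes h: "M_shaped h" and H: "is_KP h j H" and H': "is_KP h j H'"
  shows "H = H'"
proof -
  obtain p q where p: "H = fdb h j + (\<Sum>l<j-1. cst (p l) * fdb h l)"
    and q: "H' = fdb h j + (\<Sum>l<j-1. cst (q l) * fdb h l)"
    using H H' unfolding is_KP_def atLeast0LessThan by blast
  have diff: "H - H' = (\<Sum>l<j-1. cst (p l - q l) * fdb h l)"
    by (simp add: p q cst_diff algebra_simps flip: sum_subtractf)
  have "\<forall>k<j-1. (H - H') $$ (- int k) = 0"
    using H H' unfolding is_KP_def zc_def by auto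
  then have "H - H' = 0"
    unfolding diff by (rule fdb_combination_eq_0[OF h])
  then show ?thesis
    by simp
qed

lemma KP_eqI:
  assumes "M_shaped h" and "is_KP h j H"
  shows "KP h j = H"
proof -
  have "KP h j = (THE H. is_KP h j H)"
    by (simp add: KP_def is_KP_def)
  also have "\<dots> = H"
    using assms is_KP_unique by blast
  finally show ?thesis .
qed

lemma is_KP_small:
  assumes h: "M_shaped h"
  shows "is_KP h 0 1"
    and "is_KP h 1 h"
    and "is_KP h 2 (fdb h 2 - cst (fdb h 2 $$ 0))"
    and "is_KP h 3 (fdb h 3 - cst (fdb h 3 $$ (-1)) * h - cst (fdb h 3 $$ 0))"
proof -
  have cases: "n < -3 \<or> n \<in> {-3, -2, -1, 0}" if "n \<le> 0" for n :: int
    using that by auto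
  note lowest = fdb_nth_lowest[OF h, of 2] fdb_nth_lowest[OF h, of 3]
    fdb_nth_next[OF h, of 2] fdb_nth_next[OF h, of 3]
  note below = vanishes_belowD[OF M_shapedD(1)[OF h]]
    vanishes_belowD[OF vanishes_below_fdb[OF h, of 2]]
    vanishes_belowD[OF vanishes_below_fdb[OF h, of 3]]
  have sum2: "fdb h 2 - cst (fdb h 2 $$ 0)
      = fdb h 2 + (\<Sum>l\<in>{0..<2-1}. cst (- fdb h 2 $$ 0) * fdb h l)"
    by (simp add: cst_def)
  have "{0..<3-1} = {0::nat, 1}"
    by auto
  then have sum3: "fdb h 3 - cst (fdb h 3 $$ (-1)) * h - cst (fdb h 3 $$ 0)
      = fdb h 3 + (\<Sum>l\<in>{0..<3-1}.
          cst (if l = 0 then - fdb h 3 $$ 0 else - fdb h 3 $$ (-1)) * fdb h l)"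
    by (simp add: cst_def algebra_simps del: fdb.simps(2))
  show "is_KP h 0 1" "is_KP h 1 h" "is_KP h 2 (fdb h 2 - cst (fdb h 2 $$ 0))"
    "is_KP h 3 (fdb h 3 - cst (fdb h 3 $$ (-1)) * h - cst (fdb h 3 $$ 0))"
    unfolding is_KP_iff using sum2 sum3 h lowest below
    by (auto simp: M_shapedD dest!: cases)
qed

lemma KP_small:
  assumes h: "M_shaped h"
  shows "KP h 0 = 1"
    and "KP h 1 = h"
    and "KP h 2 = fdb h 2 - cst (fdb h 2 $$ 0)"
    and "KP h 3 = fdb h 3 - cst (fdb h 3 $$ (-1)) * h - cst (fdb h 3 $$ 0)"
  by (intro KP_eqI[OF h] is_KP_small[OF h])+

lemma KP_nth_nonpos:
  assumes h: "M_shaped h" and "j \<le> 3" and "n \<le> 0"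
  shows "KP h j $$ n = (if n = - int j then 1 else 0)"
proof -
  have "j = 0 \<or> j = 1 \<or> j = 2 \<or> j = 3"
    using assms(2) by auto
  then have "is_KP h j (KP h j)"
    using is_KP_small[OF h] by (elim disjE) (simp_all add: KP_small[OF h])
  then show ?thesis
    using assms(3) by (simp add: is_KP_iff)
qed

lemma KP_two_nth: "M_shaped h \<Longrightarrow> n \<noteq> 0 \<Longrightarrow> KP h 2 $$ n = fdb h 2 $$ n"
  and KP_three_nth: "M_shaped h \<Longrightarrow> n \<noteq> 0 \<Longrightarrow> KP h 3 $$ n = fdb h 3 $$ n - fdb h 3 $$ (-1) * h $$ n"
  by (simp_all add: KP_small)

lemma smooth_ser_KP:
  assumes "M_shaped h" "smooth_ser h" "j \<le> 3"
  shows "smooth_ser (KP h j)"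
proof -
  have "j = 0 \<or> j = 1 \<or> j = 2 \<or> j = 3"
    using assms(3) by auto
  then show ?thesis
    using assms(1,2) by (elim disjE) (simp_all add: KP_small smooth_ser_nth)
qed

section \<open>The equation of \<open>S\<^sub>1 \<inter> S\<^sub>2\<close>\<close>

definition s1_rhs :: "coef \<Rightarrow> coef \<Rightarrow> ser \<Rightarrow> ser" where
  "s1_rhs a0 a1 h = KP h 2 + cst a0 * KP h 1 + cst a1 * KP h 0"

definition s2_rhs :: "coef \<Rightarrow> coef \<Rightarrow> coef \<Rightarrow> ser \<Rightarrow> ser" where
  "s2_rhs a0 a1 a2 h = KP h 3 + cst a0 * KP h 2 + cst a1 * KP h 1 + cst a2 * KP h 0"

text \<open>On \<open>S\<^sub>1\<close>, \<open>a\<^sub>2\<close> is the coefficient of \<open>z\<^sup>-\<^sup>1\<close> in \<open>z a = s1_rhs a\<^sub>0 a\<^sub>1 h\<close>.\<close>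
definition S12_defect :: "coef \<Rightarrow> coef \<Rightarrow> ser \<Rightarrow> ser" where
  "S12_defect a0 a1 h = zz * s1_rhs a0 a1 h - s2_rhs a0 a1 (s1_rhs a0 a1 h $$ 1) h"

lemma inS_one_iff: "inS 1 h a \<longleftrightarrow> inN h a \<and> zz * a = s1_rhs (a $$ 0) (a $$ 1) h"
proof -
  have "{0..1::nat} = {0, 1}"
    by auto
  then show ?thesis
    by (simp add: inS_def s1_rhs_def zc_def add.assoc)
qed

lemma inS_two_iff: "inS 2 h a \<longleftrightarrow> inN h a \<and> zz\<^sup>2 * a = s2_rhs (a $$ 0) (a $$ 1) (a $$ 2) h"
proof -
  have "{0..2::nat} = {0, 1, 2}"
    by auto
  then show ?thesis
    by (simp add: inS_def s2_rhs_def zc_def add.assoc flip: One_nat_def)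
qed

lemma inS12_iff:
  "inS12 h a \<longleftrightarrow> inN h a \<and> zz * a = s1_rhs (a $$ 0) (a $$ 1) h \<and> S12_defect (a $$ 0) (a $$ 1) h = 0"
proof -
  have "zz\<^sup>2 * a = zz * (zz * a)"
    by (simp add: power2_eq_square mult.assoc)
  moreover have "a $$ 2 = s1_rhs (a $$ 0) (a $$ 1) h $$ 1" if "zz * a = s1_rhs (a $$ 0) (a $$ 1) h"
    using zz_mult_nth[of a 1] that by simp
  ultimately show ?thesis
    unfolding inS12_def inS_one_iff inS_two_iff S12_defect_def by auto
qed

lemma S12_defect_nth_nonpos:
  assumes "M_shaped h" and "n \<le> 0"
  shows "S12_defect a0 a1 h $$ n = 0"
  using assms
  by (cases "n = 0") (simp_all add: S12_defect_def s1_rhs_def s2_rhs_def KP_nth_nonpos)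

lemma S12_defect_nth_pos:
  assumes h: "M_shaped h" and "0 < n"
  shows "S12_defect a0 a1 h $$ n = fdb h 2 $$ (n + 1) + a0 * h $$ (n + 1)
    - (fdb h 3 $$ n - fdb h 3 $$ (-1) * h $$ n) - a0 * fdb h 2 $$ n - a1 * h $$ n"
  using assms
  by (simp add: S12_defect_def s1_rhs_def s2_rhs_def KP_two_nth KP_three_nth KP_small(1,2))

lemma S12_defect_variation:
  assumes h: "M_shaped h" and h': "M_shaped h'" and \<delta>: "vanishes_below (h' - h) (n + 2)"
    and n: "0 < n"
  shows "S12_defect a0 a1 h' $$ n = S12_defect a0 a1 h $$ n - (h' - h) $$ (n + 2)"
proof -
  have "n + 2 + 1 - int 2 = n + 1" "n + 2 + 1 - int 3 = n"
    by simp_all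
  then have V2: "vanishes_below (fdb h' 2 - fdb h 2) (n + 1)"
      "(fdb h' 2 - fdb h 2) $$ (n + 1) = 2 * (h' - h) $$ (n + 2)"
    and V3: "vanishes_below (fdb h' 3 - fdb h 3) n"
      "(fdb h' 3 - fdb h 3) $$ n = 3 * (h' - h) $$ (n + 2)"
    using fdb_variation[OF h h' \<delta>, of 2] fdb_variation[OF h h' \<delta>, of 3]
    unfolding of_nat_numeral by metis+
  then have V2': "fdb h' 2 $$ (n + 1) = 2 * (h' - h) $$ (n + 2) + fdb h 2 $$ (n + 1)"
    and V3': "fdb h' 3 $$ n = 3 * (h' - h) $$ (n + 2) + fdb h 3 $$ n"
    by (simp_all only: fls_minus_nth diff_eq_eq)
  have same: "fdb h' 2 $$ n = fdb h 2 $$ n" "fdb h' 3 $$ (-1) = fdb h 3 $$ (-1)"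
    "h' $$ n = h $$ n" "h' $$ (n + 1) = h $$ (n + 1)"
    using vanishes_belowD[OF V2(1), of n] vanishes_belowD[OF V3(1), of "-1"]
      vanishes_belowD[OF \<delta>, of n] vanishes_belowD[OF \<delta>, of "n + 1"] n
    by simp_all
  show ?thesis
    unfolding S12_defect_nth_pos[OF h n] S12_defect_nth_pos[OF h' n] V2' V3' same
    by (simp add: algebra_simps)
qed

section \<open>Existence and uniqueness of the solution\<close>

lemma S12_defect_eq_0_unique:
  assumes h: "M_shaped h" "S12_defect a0 a1 h = 0" and h': "M_shaped h'" "S12_defect a0 a1 h' = 0"
    and "h $$ 1 = h' $$ 1" and "h $$ 2 = h' $$ 2"
  shows "h = h'"
proof (rule ccontr)
  assume "h \<noteq> h'"
  define m where "m = fls_subdegree (h' - h)"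
  have lead: "(h' - h) $$ m \<noteq> 0"
    unfolding m_def using \<open>h \<noteq> h'\<close> by (intro nth_fls_subdegree_nonzero) simp
  have below: "vanishes_below (h' - h) m"
    unfolding vanishes_below_def m_def using fls_eq0_below_subdegree by blast
  have "(h' - h) $$ k = 0" if "k \<le> 2" for k
  proof (cases "k \<le> 0")
    case True
    then show ?thesis
      using KP_nth_nonpos[OF h(1), of 1 k] KP_nth_nonpos[OF h'(1), of 1 k]
      by (simp add: KP_small(2)[OF h(1)] KP_small(2)[OF h'(1)])
  next
    case False
    with that have "k = 1 \<or> k = 2"
      by auto
    with assms(5,6) show ?thesis
      by auto
  qed
  then have "2 < m"
    using lead by (meson not_less)
  then have "S12_defect a0 a1 h' $$ (m - 2) = S12_defect a0 a1 h $$ (m - 2) - (h' - h) $$ m"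
    using S12_defect_variation[OF h(1) h'(1), of "m - 2"] below by simp
  with lead h(2) h'(2) show False
    by simp
qed

lemma smooth_ser_S12_defect:
  assumes "M_shaped h" "smooth_ser h" "smooth a0" "smooth a1"
  shows "smooth_ser (S12_defect a0 a1 h)"
  using assms by (simp add: S12_defect_def s1_rhs_def s2_rhs_def smooth_ser_KP smooth_ser_nth)

text \<open>Step \<open>k + 1\<close> sets the coefficient of index \<open>k + 3\<close> so that, by
  \<open>S12_defect_variation\<close>, the defect vanishes at index \<open>k + 1\<close>.\<close>
primrec S12_approx :: "coef \<Rightarrow> coef \<Rightarrow> coef \<Rightarrow> coef \<Rightarrow> nat \<Rightarrow> ser" where
  "S12_approx a0 a1 h1 h2 0 = zz + cst h1 * fls_X + cst h2 * fls_X ^ 2"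
| "S12_approx a0 a1 h1 h2 (Suc k) = S12_approx a0 a1 h1 h2 k
    + cst (S12_defect a0 a1 (S12_approx a0 a1 h1 h2 k) $$ (int k + 1)) * fls_X ^ (k + 3)"

lemma S12_approx_stable:
  "k \<le> l \<Longrightarrow> n \<le> int k + 2 \<Longrightarrow> S12_approx a0 a1 h1 h2 l $$ n = S12_approx a0 a1 h1 h2 k $$ n"
  by (induction l) (auto simp: le_Suc_eq)

lemma S12_approx_props:
  assumes "smooth a0" "smooth a1" "smooth h1" "smooth h2"
  shows "M_shaped (S12_approx a0 a1 h1 h2 k) \<and> smooth_ser (S12_approx a0 a1 h1 h2 k)
    \<and> S12_approx a0 a1 h1 h2 k $$ 1 = h1 \<and> S12_approx a0 a1 h1 h2 k $$ 2 = h2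
    \<and> (\<forall>n\<le>int k. S12_defect a0 a1 (S12_approx a0 a1 h1 h2 k) $$ n = 0)"
proof (induction k)
  case 0
  have "M_shaped (S12_approx a0 a1 h1 h2 0)"
    by (simp add: M_shaped_def vanishes_below_def)
  with assms show ?case
    by (simp add: S12_defect_nth_nonpos)
next
  case (Suc k)
  let ?h = "S12_approx a0 a1 h1 h2 k" and ?h' = "S12_approx a0 a1 h1 h2 (Suc k)"
  have IH: "M_shaped ?h" "smooth_ser ?h" "?h $$ 1 = h1" "?h $$ 2 = h2"
    "\<And>n. n \<le> int k \<Longrightarrow> S12_defect a0 a1 ?h $$ n = 0"
    using Suc.IH by auto
  have same: "?h' $$ n = ?h $$ n" if "n \<le> int k + 2" for n
    using that by simp
  have M: "M_shaped ?h'"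
    using IH(1) same by (simp add: M_shaped_def vanishes_below_def)
  have "smooth (S12_defect a0 a1 ?h $$ (int k + 1))"
    using smooth_ser_S12_defect[OF IH(1,2) assms(1,2)] by (rule smooth_ser_nth)
  then have S: "smooth_ser ?h'"
    using IH(2) by simp
  have "S12_defect a0 a1 ?h' $$ n = 0" if n: "0 < n" "n \<le> int (Suc k)" for n
  proof -
    have "vanishes_below (?h' - ?h) (n + 2)"
      using n by (simp add: vanishes_below_def)
    then have "S12_defect a0 a1 ?h' $$ n = S12_defect a0 a1 ?h $$ n - (?h' - ?h) $$ (n + 2)"
      using S12_defect_variation[OF IH(1) M] n(1) by blast
    also have "\<dots> = 0"
      using n IH(5)[of n] by (cases "n = int k + 1") auto
    finally show ?thesis .
  qed
  then have "\<forall>n\<le>int (Suc k). S12_defect a0 a1 ?h' $$ n = 0"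
    using S12_defect_nth_nonpos[OF M] by (metis not_less)
  then show ?case
    using M S IH(3,4) same[of 1] same[of 2] by simp
qed

definition S12_solution :: "coef \<Rightarrow> coef \<Rightarrow> coef \<Rightarrow> coef \<Rightarrow> ser" where
  "S12_solution a0 a1 h1 h2 = Abs_fls (\<lambda>n. S12_approx a0 a1 h1 h2 (nat n) $$ n)"

lemma S12_solution_nth:
  "n \<le> int k + 2 \<Longrightarrow> S12_solution a0 a1 h1 h2 $$ n = S12_approx a0 a1 h1 h2 k $$ n"
proof -
  have "S12_solution a0 a1 h1 h2 $$ n = S12_approx a0 a1 h1 h2 (nat n) $$ n"
    unfolding S12_solution_def
    by (rule nth_Abs_fls_lower_bound[of "-1"]) simp
  also have "\<dots> = S12_approx a0 a1 h1 h2 k $$ n" if "n \<le> int k + 2"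
    using that by (cases "nat n \<le> k") (auto intro: S12_approx_stable simp:
      S12_approx_stable[symmetric])
  finally show "n \<le> int k + 2 \<Longrightarrow> ?thesis" .
qed

lemma S12_solution_props:
  assumes "smooth a0" "smooth a1" "smooth h1" "smooth h2"
  shows "M_shaped (S12_solution a0 a1 h1 h2) \<and> smooth_ser (S12_solution a0 a1 h1 h2)
    \<and> S12_solution a0 a1 h1 h2 $$ 1 = h1 \<and> S12_solution a0 a1 h1 h2 $$ 2 = h2
    \<and> S12_defect a0 a1 (S12_solution a0 a1 h1 h2) = 0"
proof -
  let ?h = "S12_solution a0 a1 h1 h2" and ?A = "S12_approx a0 a1 h1 h2"
  note approx = S12_approx_props[OF assms]
  have low: "?h $$ n = ?A 0 $$ n" if "n \<le> 2" for n
    using that by (intro S12_solution_nth) simp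
  have M: "M_shaped ?h"
    using approx[of 0] low by (simp add: M_shaped_def vanishes_below_def)
  have "smooth (?h $$ n)" for n
    using approx[of "nat n"] S12_solution_nth[of n "nat n"] by (simp add: smooth_ser_nth)
  then have S: "smooth_ser ?h"
    by (rule smooth_serI)
  have "S12_defect a0 a1 ?h $$ n = 0" for n
  proof (cases "n \<le> 0")
    case True
    with M show ?thesis
      by (rule S12_defect_nth_nonpos)
  next
    case False
    have \<delta>: "vanishes_below (?h - ?A (nat n)) (n + 2)"
      by (simp add: vanishes_below_def S12_solution_nth)
    have "?h $$ (n + 2) = ?A (nat n) $$ (n + 2)"
      using False by (intro S12_solution_nth) simp
    then have "S12_defect a0 a1 ?h $$ n = S12_defect a0 a1 (?A (nat n)) $$ n"
      using S12_defect_variation[OF conjunct1[OF approx[of "nat n"]] M \<delta>] False by simp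
    with False show ?thesis
      using approx[of "nat n"] by simp
  qed
  then show ?thesis
    using M S approx[of 0] low[of 1] low[of 2] by (simp add: fls_eq_iff)
qed

lemma s1_rhs_nth_nonpos:
  "M_shaped h \<Longrightarrow> n \<le> 0 \<Longrightarrow>
    s1_rhs a0 a1 h $$ n = (if n = -2 then 1 else if n = -1 then a0 else if n = 0 then a1 else 0)"
  by (simp add: s1_rhs_def KP_nth_nonpos)

lemma S12_unique_existence:
  assumes "smooth a0" "smooth a1" "smooth h1" "smooth h2"
  shows "\<exists>!(h, a). inS12 h a \<and> a $$ 0 = a0 \<and> a $$ 1 = a1 \<and> h $$ 1 = h1 \<and> h $$ 2 = h2"
proof -
  let ?h = "S12_solution a0 a1 h1 h2"
  let ?a = "fls_X * s1_rhs a0 a1 ?h"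
  have h: "M_shaped ?h" "smooth_ser ?h" "?h $$ 1 = h1" "?h $$ 2 = h2" "S12_defect a0 a1 ?h = 0"
    using S12_solution_props[OF assms] by auto
  have a_low: "vanishes_below ?a (-1)" "?a $$ (-1) = 1" "?a $$ 0 = a0" "?a $$ 1 = a1"
    using s1_rhs_nth_nonpos[OF h(1)] by (simp_all add: vanishes_below_def)
  have "smooth_ser ?a"
    using h(1,2) assms(1,2) by (simp add: s1_rhs_def smooth_ser_KP)
  then have "inN ?h ?a"
    using h(1,2) a_low by (simp add: inN_def inM_iff inA_iff)
  then have S12: "inS12 ?h ?a"
    using h(5) a_low by (simp add: inS12_iff)
  show ?thesis
  proof (rule ex1I[of _ "(?h, ?a)"])
    fix p
    assume "case p of (h, a) \<Rightarrow> inS12 h a \<and> a $$ 0 = a0 \<and> a $$ 1 = a1 \<and> h $$ 1 = h1 \<and> h $$ 2 = h2"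
    then obtain h' a' where p: "p = (h', a')" and S12': "inS12 h' a'"
      and coeffs: "a' $$ 0 = a0" "a' $$ 1 = a1" "h' $$ 1 = h1" "h' $$ 2 = h2"
      by (cases p) auto
    have M': "M_shaped h'" and a': "zz * a' = s1_rhs a0 a1 h'" and D': "S12_defect a0 a1 h' = 0"
      using S12' coeffs by (auto simp: inS12_iff inN_def inM_iff)
    have "h' = ?h"
      using S12_defect_eq_0_unique[OF M' D' h(1) h(5)] coeffs h(3,4) by simp
    moreover have "a' = ?a"
      using arg_cong[OF a', of "\<lambda>x. fls_X * x"] \<open>h' = ?h\<close> by simp
    ultimately show "p = (?h, ?a)"
      using p by simp
  qed (use S12 a_low h(3,4) in simp)
qed

section \<open>The restricted flow\<close>

lemma inS12D:
  assumes "inS12 h a"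
  shows "M_shaped h" "smooth_ser h" "smooth_ser a" "vanishes_below a (-1)" "a $$ (-1) = 1"
    "zz * a = s1_rhs (a $$ 0) (a $$ 1) h" "S12_defect (a $$ 0) (a $$ 1) h = 0"
    "zz\<^sup>2 * a = s2_rhs (a $$ 0) (a $$ 1) (a $$ 2) h"
proof -
  from assms have "inS 2 h a"
    by (simp add: inS12_def)
  then show "zz\<^sup>2 * a = s2_rhs (a $$ 0) (a $$ 1) (a $$ 2) h"
    by (simp add: inS_two_iff)
  show "M_shaped h" "smooth_ser h" "smooth_ser a" "vanishes_below a (-1)" "a $$ (-1) = 1"
    "zz * a = s1_rhs (a $$ 0) (a $$ 1) h" "S12_defect (a $$ 0) (a $$ 1) h = 0"
    using assms by (auto simp: inS12_iff inN_def inM_iff inA_iff)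
qed

lemma inS12_a2:
  assumes "inS12 h a"
  shows "a $$ 2 = 2 * h $$ 2 + deriv (h $$ 1) + a $$ 0 * h $$ 1"
proof -
  have "a $$ 2 = s1_rhs (a $$ 0) (a $$ 1) h $$ 1"
    using zz_mult_nth[of a 1] inS12D(6)[OF assms] by simp
  then show ?thesis
    using inS12D(1)[OF assms]
    by (simp add: s1_rhs_def KP_two_nth KP_small(1,2) fdb_two_nth)
qed

lemma inS12_h3:
  assumes "inS12 h a"
  shows "h $$ 3 = - deriv (deriv (h $$ 1)) - 2 * deriv (h $$ 2) + (h $$ 1)\<^sup>2
    - a $$ 1 * h $$ 1 - a $$ 0 * (deriv (h $$ 1) + h $$ 2)"
proof -
  note h = inS12D(1,2)[OF assms]
  have "0 = S12_defect (a $$ 0) (a $$ 1) h $$ 1"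
    using inS12D(7)[OF assms] by simp
  also have "\<dots> = - deriv (deriv (h $$ 1)) - 2 * deriv (h $$ 2) + (h $$ 1)\<^sup>2
      - a $$ 1 * h $$ 1 - a $$ 0 * (deriv (h $$ 1) + h $$ 2) - h $$ 3"
    using h by (simp add: S12_defect_nth_pos fdb_two_nth fdb_three_nth smooth_ser_nth algebra_simps
      power2_eq_square)
  finally show ?thesis
    by (simp add: eq_diff_eq)
qed

lemma inS12_flow_h:
  assumes "inS12 h a"
  shows "dkp_h 2 h a $$ 1 = deriv (2 * h $$ 2 + deriv (h $$ 1))"
    and "dkp_h 2 h a $$ 2
      = - deriv (2 * deriv (deriv (h $$ 1)) + 3 * deriv (h $$ 2) - 3 * (h $$ 1)\<^sup>2
        + 2 * a $$ 0 * (deriv (h $$ 1) + h $$ 2) + 2 * a $$ 1 * h $$ 1)"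
proof -
  note h = inS12D(1,2)[OF assms]
  have smooth: "smooth (h $$ k)" "smooth (a $$ k)" for k
    using inS12D(2,3)[OF assms] by (simp_all add: smooth_ser_nth)
  show "dkp_h 2 h a $$ 1 = deriv (2 * h $$ 2 + deriv (h $$ 1))"
    using h by (simp add: dkp_h_def KP_two_nth fdb_two_nth add.commute)
  have KP22: "KP h 2 $$ 2 = - (2 * deriv (deriv (h $$ 1)) + 3 * deriv (h $$ 2) - 3 * (h $$ 1)\<^sup>2
      + 2 * a $$ 0 * (deriv (h $$ 1) + h $$ 2) + 2 * a $$ 1 * h $$ 1)"
    using h by (simp add: KP_two_nth fdb_two_nth inS12_h3[OF assms] algebra_simps power2_eq_square)
  then show "dkp_h 2 h a $$ 2
      = - deriv (2 * deriv (deriv (h $$ 1)) + 3 * deriv (h $$ 2) - 3 * (h $$ 1)\<^sup>2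
        + 2 * a $$ 0 * (deriv (h $$ 1) + h $$ 2) + 2 * a $$ 1 * h $$ 1)"
    unfolding dkp_h_def Dx_nth KP22 by (intro deriv_uminus_smooth) (simp add: smooth)
qed

lemma inS12_fdb_identity:
  assumes "inS12 h a"
  shows "zz * (fdb h 2 + cst (a $$ 0) * fdb h 1 + cst (a $$ 1 - 2 * h $$ 1))
    = fdb h 3 + cst (a $$ 0) * fdb h 2 + cst (a $$ 1 - 3 * h $$ 1) * fdb h 1
      + cst (a $$ 2 - 2 * a $$ 0 * h $$ 1 - 3 * h $$ 2 - 3 * deriv (h $$ 1))"
proof -
  note h = inS12D(1,2)[OF assms]
  have smooth: "smooth (h $$ k)" for k
    using h(2) by (rule smooth_ser_nth)
  have KP2: "KP h 2 = fdb h 2 - cst (2 * h $$ 1)"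
    and KP3: "KP h 3 = fdb h 3 - cst (3 * h $$ 1) * h - cst (3 * h $$ 2 + 3 * deriv (h $$ 1))"
    using h(1) smooth by (simp_all add: KP_small fdb_two_nth fdb_three_nth)
  have "fdb h 2 + cst (a $$ 0) * fdb h 1 + cst (a $$ 1 - 2 * h $$ 1) = zz * a"
    using h(1) by (simp add: inS12D(6)[OF assms] s1_rhs_def KP2 KP_small(1,2) cst_diff
      algebra_simps)
  then have "zz * (fdb h 2 + cst (a $$ 0) * fdb h 1 + cst (a $$ 1 - 2 * h $$ 1)) = zz\<^sup>2 * a"
    by (simp add: power2_eq_square mult.assoc)
  also have "\<dots> = fdb h 3 + cst (a $$ 0) * fdb h 2 + cst (a $$ 1 - 3 * h $$ 1) * fdb h 1
      + cst (a $$ 2 - 2 * a $$ 0 * h $$ 1 - 3 * h $$ 2 - 3 * deriv (h $$ 1))"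
    unfolding inS12D(8)[OF assms] s2_rhs_def KP2 KP3 KP_small(1,2)[OF h(1)]
    by (simp add: cst_diff cst_add cst_mult algebra_simps)
  finally show ?thesis .
qed

lemma logder_props:
  assumes a: "vanishes_below a (-1)" "a $$ (-1) = 1"
  shows "a * logder a = Dx a" and "vanishes_below (logder a) 1"
proof -
  define b where "b = fls_right_inverse a 1"
  have "a \<noteq> 0"
    using a(2) by auto
  then have "fls_subdegree a = -1"
    using a by (intro fls_subdegree_eqI) (simp_all add: vanishes_belowD)
  then have ab: "a * b = 1" and "fls_subdegree b = 1"
    using a(2) fls_right_inverse[of a 1] fls_lr_inverse_subdegree(2)[of 1 a] by (simp_all add:
      b_def)
  then have b: "vanishes_below b 1"
    by (simp add: vanishes_below_def)
  have "logder a = b * Dx a"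
    unfolding logder_def
  proof (rule the_equality)
    show "a * (b * Dx a) = Dx a"
      by (simp add: ab flip: mult.assoc)
    show "r = b * Dx a" if "a * r = Dx a" for r
    proof -
      have "r = (a * b) * r"
        by (simp add: ab)
      also have "\<dots> = b * (a * r)"
        by (simp add: ac_simps)
      finally show ?thesis
        by (simp add: that)
    qed
  qed
  moreover have "Dx a $$ n = 0" if "n < 0" for n
    using that a by (cases "n = -1") (simp_all add: vanishes_belowD)
  then have "vanishes_below (Dx a) 0"
    by (simp add: vanishes_below_def)
  ultimately show "a * logder a = Dx a" "vanishes_below (logder a) 1"
    using vanishes_below_mult[OF b, of "Dx a" 0] by (simp_all add: ab flip: mult.assoc)
qed

lemma logder_nth:
  assumes a: "vanishes_below a (-1)" "a $$ (-1) = 1"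
  shows "logder a $$ 1 = deriv (a $$ 0)"
    and "logder a $$ 2 = deriv (a $$ 1) - a $$ 0 * deriv (a $$ 0)"
    and "logder a $$ 3 = deriv (a $$ 2) - a $$ 0 * logder a $$ 2 - a $$ 1 * logder a $$ 1"
proof -
  have nth: "Dx a $$ n = (\<Sum>i=-1..n - 1. a $$ i * logder a $$ (n - i))" for n
    using fls_times_nth_vanishes_below[OF a(1) logder_props(2)[OF a]] logder_props(1)[OF a]
    by simp
  show r1: "logder a $$ 1 = deriv (a $$ 0)"
    using nth[of 0] a(2) by simp
  show "logder a $$ 2 = deriv (a $$ 1) - a $$ 0 * deriv (a $$ 0)"
    using nth[of 1] a(2) r1 by (simp add: Icc_int_insert_lb eq_diff_eq)
  show "logder a $$ 3 = deriv (a $$ 2) - a $$ 0 * logder a $$ 2 - a $$ 1 * logder a $$ 1"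
    using nth[of 2] a(2) by (simp add: Icc_int_insert_lb algebra_simps)
qed

lemma inS12_flow_a:
  assumes "inS12 h a"
  shows "dkp_a 2 h a $$ 0 = deriv (2 * a $$ 1 - (a $$ 0)\<^sup>2 + deriv (a $$ 0))"
    and "dkp_a 2 h a $$ 1
      = 2 * deriv (a $$ 2) + deriv (deriv (a $$ 1)) + 2 * deriv (a $$ 0) * (h $$ 1 - a $$ 1)"
proof -
  note h = inS12D(1,2)[OF assms] and a = inS12D(3,4,5)[OF assms]
  have smooth: "smooth (h $$ k)" "smooth (a $$ k)" for k
    using h(2) a(1) by (simp_all add: smooth_ser_nth)
  define r where "r = logder a"
  have r: "vanishes_below r 1"
    unfolding r_def using logder_props[OF a(2,3)] by auto
  note r1 = logder_nth(1)[OF a(2,3), folded r_def]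
    and r2 = logder_nth(2)[OF a(2,3), folded r_def]
    and r3 = logder_nth(3)[OF a(2,3), folded r_def]
  have "vanishes_below (h + r) (-1)"
    using M_shapedD(1)[OF h(1)] vanishes_below_mono[OF r] by (intro vanishes_below_add) auto
  then have ht: "M_shaped (htilde h a)"
    using h(1) vanishes_belowD[OF r, of "-1"] vanishes_belowD[OF r, of 0]
    by (simp add: htilde_def r_def M_shaped_def)
  define D where "D = KP (htilde h a) 2 - KP h 2"
  have D: "vanishes_below D 1"
    using KP_nth_nonpos[OF h(1), of 2] KP_nth_nonpos[OF ht, of 2] by (simp add: D_def
      vanishes_below_def)
  have D1: "D $$ 1 = deriv (r $$ 1) + 2 * r $$ 2"
    using h(1) ht smooth by (simp add: D_def KP_two_nth fdb_two_nth htilde_def r1 flip: r_def)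
  have D2: "D $$ 2 = deriv (r $$ 2) + 2 * r $$ 3 + 2 * h $$ 1 * r $$ 1 + (r $$ 1)\<^sup>2"
    using h(1) ht smooth
    by (simp add: D_def KP_two_nth fdb_two_nth htilde_def r1 r2 algebra_simps power2_eq_square
      flip: r_def)
  have aD_nth: "dkp_a 2 h a $$ n = (\<Sum>i=-1..n - 1. a $$ i * D $$ (n - i))" for n
    using fls_times_nth_vanishes_below[OF a(2) D] by (simp add: dkp_a_def D_def)
  show "dkp_a 2 h a $$ 0 = deriv (2 * a $$ 1 - (a $$ 0)\<^sup>2 + deriv (a $$ 0))"
    using aD_nth[of 0] a(3) smooth by (simp add: D1 r1 r2 algebra_simps power2_eq_square)
  show "dkp_a 2 h a $$ 1
      = 2 * deriv (a $$ 2) + deriv (deriv (a $$ 1)) + 2 * deriv (a $$ 0) * (h $$ 1 - a $$ 1)"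
    using aD_nth[of 1] a(3) smooth
    by (simp add: Icc_int_insert_lb D1 D2 r3 r2 r1 algebra_simps power2_eq_square)
qed

theorem mainTheorem7:
  shows
   "(\<forall>a0 a1 h1 h2. smooth a0 \<and> smooth a1 \<and> smooth h1 \<and> smooth h2 \<longrightarrow>
       (\<exists>!(h, a). inS12 h a \<and> zc a 0 = a0 \<and> zc a (-1) = a1
                   \<and> zc h (-1) = h1 \<and> zc h (-2) = h2))
    \<and> (\<forall>h a. inS12 h a \<longrightarrow>
       (let a0 = zc a 0; a1 = zc a (-1); a2 = zc a (-2);
            h1 = zc h (-1); h2 = zc h (-2); h3 = zc h (-3) in
          a2 = 2 * h2 + deriv h1 + a0 * h1
        \<and> h3 = - deriv (deriv h1) - 2 * deriv h2 + h1 ^ 2 - a1 * h1 - a0 * (deriv h1 + h2)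
        \<and> zc (dkp_a 2 h a) 0 = deriv (2 * a1 - a0 ^ 2 + deriv a0)
        \<and> zc (dkp_a 2 h a) (-1) = 2 * deriv a2 + deriv (deriv a1) + 2 * deriv a0 * (h1 - a1)
        \<and> zc (dkp_h 2 h a) (-1) = deriv (2 * h2 + deriv h1)
        \<and> zc (dkp_h 2 h a) (-2) = - deriv (2 * deriv (deriv h1) + 3 * deriv h2 - 3 * h1 ^ 2
                                    + 2 * a0 * (deriv h1 + h2) + 2 * a1 * h1)
        \<and> zz * (fdb h 2 + cst a0 * fdb h 1 + cst (a1 - 2 * h1))
            = fdb h 3 + cst a0 * fdb h 2 + cst (a1 - 3 * h1) * fdb h 1
              + cst (a2 - 2 * a0 * h1 - 3 * h2 - 3 * deriv h1)))"
proof (intro conjI allI impI)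
  fix a0 a1 h1 h2 :: coef
  assume "smooth a0 \<and> smooth a1 \<and> smooth h1 \<and> smooth h2"
  then show "\<exists>!(h, a). inS12 h a \<and> zc a 0 = a0 \<and> zc a (-1) = a1 \<and> zc h (-1) = h1
      \<and> zc h (-2) = h2"
    using S12_unique_existence[of a0 a1 h1 h2] by (simp add: zc_def)
qed (unfold Let_def zc_def minus_minus minus_zero, intro conjI,
  (erule inS12_a2 inS12_h3 inS12_flow_a inS12_flow_h inS12_fdb_identity)+)

end
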